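(* Let $(\mathcal S,\gamma)$ be a normalized IFS path in $\mathbb{R}^2$, $\mathcal S=\{S_1,\dots,S_N\}$, such that (1) $S_1$ and $S_N$ are orientation preserving; (2) there exist $t,s\in\mathbb{N}$ with $r_1^t=r_N^s$ and $t\alpha_1-s\alpha_N\in 2\pi(\mathbb{R}\setminus\mathbb{Q})$; (3) there exists $i\in\{1,\dots,N-1\}$ such that (a) $S_i$ and $S_{i+1}$ are either both orientation preserving or both orientation reversing, and (b) there is no rotation around the point $S_i(\mathbf e_1)=S_{i+1}(0)$ that maps $S_i(\gamma)$ into $S_{i+1}(\gamma)$, and no such rotation mapping $S_{i+1}(\gamma)$ into $S_i(\gamma)$. Then $(\mathcal S,\gamma)$ is not an IFS arc.
   Context: Let $\mathcal S=\{S_1,\dots,S_N\}$, $N\ge2$, be contracting similarities of $\mathbb{R}^2$, $S_j(x)=r_jA_j(x)+b_j$ with $r_j\in(0,1)$, $A_j$ orthogonal. Write $A_j=R_{\alpha_j}\circ I_j$ where $R_{\alpha_j}$ is counterclockwise rotation by $\alpha_j\in[0,2\pi)$ and $I_j$ is the identity or reflection in the $x$-axis; for orientation-preserving $S_j$, $A_j=R_{\alpha_j}$. The invariant set $\gamma$ is the unique nonempty compact set with $\gamma=\bigcup_jS_j(\gamma)$. $(\mathcal S,\gamma)$ is a normalized IFS path if $S_1(0)=0$, $S_N(\mathbf e_1)=\mathbf e_1$ with $\mathbf e_1=(1,0)$, and $S_j(\mathbf e_1)=S_{j+1}(0)$ for $j=1,\dots,N-1$. It is an IFS arc if moreover $S_j(\gamma)\cap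 S_{j+1}(\gamma)=\{S_{j+1}(0)\}$ for $j=1,\dots,N-1$ and $S_j(\gamma)\cap S_k(\gamma)=\emptyset$ for $j,k\in\{1,\dots,N\}$, $|j-k|>1$. *)

theory Defs
  imports "HOL-Analysis.Analysis"
begin

text \<open>The plane R^2 is identified with the complex numbers; e1 = (1,0) is 1.
A contracting similarity S(x) = r A x + b with A = R_alpha o I, where I is the identity
or the reflection in the x-axis (complex conjugation).\<close>

definition simil :: "real \<Rightarrow> real \<Rightarrow> bool \<Rightarrow> complex \<Rightarrow> complex \<Rightarrow> complex" where
  "simil r a rf b z = complex_of_real r * cis a * (if rf then cnj z else z) + b"

definition rot_around :: "complex \<Rightarrow> real \<Rightarrow> complex \<Rightarrow> complex" where
  "rot_around p theta z = p + cis theta * (z - p)"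

definition IFS_data :: "nat \<Rightarrow> (nat \<Rightarrow> real) \<Rightarrow> (nat \<Rightarrow> real) \<Rightarrow> (nat \<Rightarrow> bool) \<Rightarrow> (nat \<Rightarrow> complex) \<Rightarrow> bool" where
  "IFS_data N r \<alpha> rf b \<longleftrightarrow> N \<ge> 2 \<and>
     (\<forall>j\<in>{1..N}. 0 < r j \<and> r j < 1 \<and> 0 \<le> \<alpha> j \<and> \<alpha> j < 2 * pi)"

definition is_attractor :: "nat \<Rightarrow> (nat \<Rightarrow> complex \<Rightarrow> complex) \<Rightarrow> complex set \<Rightarrow> bool" where
  "is_attractor N S \<gamma> \<longleftrightarrow> compact \<gamma> \<and> \<gamma> \<noteq> {} \<and> \<gamma> = (\<Union>j\<in>{1..N}. S j ` \<gamma>)"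

definition normalized_IFS_path :: "nat \<Rightarrow> (nat \<Rightarrow> complex \<Rightarrow> complex) \<Rightarrow> complex set \<Rightarrow> bool" where
  "normalized_IFS_path N S \<gamma> \<longleftrightarrow> is_attractor N S \<gamma> \<and>
     S 1 0 = 0 \<and> S N 1 = 1 \<and> (\<forall>j\<in>{1..N-1}. S j 1 = S (Suc j) 0)"

definition IFS_arc :: "nat \<Rightarrow> (nat \<Rightarrow> complex \<Rightarrow> complex) \<Rightarrow> complex set \<Rightarrow> bool" where
  "IFS_arc N S \<gamma> \<longleftrightarrow> normalized_IFS_path N S \<gamma> \<and>
     (\<forall>j\<in>{1..N-1}. S j ` \<gamma> \<inter> S (Suc j) ` \<gamma> = {S (Suc j) 0}) \<and>
     (\<forall>j\<in>{1..N}. \<forall>k\<in>{1..N}. (j > k + 1 \<or> k > j + 1) \<longrightarrow> S j ` \<gamma> \<inter> S k ` \<gamma> = {})"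

end

theory Submission
  imports Defs
begin

text \<open>
  Suppose the path were an arc and let \<open>\<pi> : [0, 1] \<rightarrow> \<gamma>\<close> be its self-similar
  parametrization, \<open>\<pi> ((j - 1 + y) / N) = S\<^sub>j (\<pi> y)\<close>, obtained from Banach's fixed point
  theorem. As \<open>S\<^sub>1\<close> and \<open>S\<^sub>N\<close> are orientation preserving and fix \<open>0\<close> and \<open>1\<close>,
  \<open>\<pi> (\<tau> / N\<^sup>t) = q\<^sub>1\<^sup>t \<pi> \<tau>\<close> and \<open>\<pi> (1 - \<tau> / N\<^sup>s) - 1 = q\<^sub>N\<^sup>s (\<pi> (1 - \<tau>) - 1)\<close> with
  \<open>q\<^sub>j = r\<^sub>j cis \<alpha>\<^sub>j\<close>. Since \<open>S\<^sub>i\<close> and \<open>S\<^sub>i\<^sub>+\<^sub>1\<close> have the same orientation, near the junction point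
  \<open>p = S\<^sub>i 1 = S\<^sub>i\<^sub>+\<^sub>1 0\<close> the two pieces are curves spiralling into \<open>p\<close>, invariant under
  multiplication by numbers of equal modulus \<open>r\<^sub>1\<^sup>t = r\<^sub>N\<^sup>s\<close> but different arguments, as
  \<open>t \<alpha>\<^sub>1 - s \<alpha>\<^sub>N\<close> is not a multiple of \<open>2 \<pi>\<close>. In logarithmic coordinates these curves
  drift off to infinity in different directions, so Fashoda's theorem makes them cross
  away from \<open>p\<close>, whereas consecutive pieces of an arc only share the junction point.
\<close>

lemma continuous_on_first_hit:
  fixes h :: "real \<Rightarrow> real"
  assumes h: "continuous_on {s..e} h" and "s \<le> e" "h s \<le> c" "c \<le> h e"
  obtains v where "v \<in> {s..e}" "h v = c" "\<And>t. t \<in> {s..<v} \<Longrightarrow> h t < c"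
proof -
  define H where "H = {s..e} \<inter> h -` {c..}"
  have "closed H"
    unfolding H_def by (rule continuous_closed_preimage[OF h]) auto
  then have cH: "compact H"
    by (simp add: H_def compact_eq_bounded_closed bounded_Int)
  have "e \<in> H"
    using assms by (auto simp: H_def)
  then obtain v where vH: "v \<in> H" and vmin: "\<And>t. t \<in> H \<Longrightarrow> v \<le> t"
    using compact_attains_inf[OF cH] by blast
  have v: "s \<le> v" "v \<le> e" "c \<le> h v"
    using vH by (auto simp: H_def)
  obtain x where x: "s \<le> x" "x \<le> v" "h x = c"
    using IVT'[of h s c v] assms(3) v continuous_on_subset[OF h, of "{s..v}"] by auto
  then have "x \<in> H"
    using v by (auto simp: H_def)
  with vmin x have "h v = c"
    by (metis order_antisym)
  moreover have "h t < c" if t: "t \<in> {s..<v}" for t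
  proof (rule ccontr)
    assume "\<not> h t < c"
    then have "t \<in> H"
      using t v by (auto simp: H_def)
    with vmin t show False
      by fastforce
  qed
  ultimately show thesis
    using that v by auto
qed

lemma continuous_on_last_hit:
  fixes h :: "real \<Rightarrow> real"
  assumes h: "continuous_on {s..e} h" and "s \<le> e" "h s \<le> c" "c \<le> h e"
  obtains u where "u \<in> {s..e}" "h u = c" "\<And>t. t \<in> {u<..e} \<Longrightarrow> c < h t"
proof -
  have "continuous_on {s..e} (\<lambda>t. - h (s + e - t))"
    by (intro continuous_intros continuous_on_compose2[OF h]) auto
  then obtain v where v: "v \<in> {s..e}" "- h (s + e - v) = - c"
      and below: "\<And>t. t \<in> {s..<v} \<Longrightarrow> - h (s + e - t) < - c"
    using continuous_on_first_hit[of s e "\<lambda>t. - h (s + e - t)" "- c"] assms by auto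
  show thesis
  proof (rule that[of "s + e - v"])
    show "c < h t" if "t \<in> {s + e - v<..e}" for t
      using below[of "s + e - t"] that v by auto
  qed (use v in auto)
qed

lemma continuous_on_crosses_strip:
  fixes h :: "real \<Rightarrow> real"
  assumes h: "continuous_on {0..1} h" and "h 0 \<le> a" "a < b" "b \<le> h 1"
  obtains u v where "0 \<le> u" "u \<le> v" "v \<le> 1" "h u = a" "h v = b" "h ` {u..v} \<subseteq> {a..b}"
proof -
  obtain v where v: "v \<in> {0..1}" "h v = b" and below: "\<And>t. t \<in> {0..<v} \<Longrightarrow> h t < b"
    using continuous_on_first_hit[OF h, where c=b] assms(2-4) by auto
  obtain u where u: "u \<in> {0..v}" "h u = a" and above: "\<And>t. t \<in> {u<..v} \<Longrightarrow> a < h t"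
  proof (rule continuous_on_last_hit[of 0 v h a])
    show "continuous_on {0..v} h"
      using continuous_on_subset[OF h] v by auto
    show "h 0 \<le> a" "a \<le> h v"
      using assms v by auto
  qed (use v in auto)
  have "h t \<in> {a..b}" if t: "t \<in> {u..v}" for t
  proof -
    have "h t \<le> b"
      using below[of t] v t u by (cases "t = v") auto
    moreover have "a \<le> h t"
      using above[of t] u t by (cases "t = u") auto
    ultimately show ?thesis by simp
  qed
  then show thesis
    using that[of u v] u v by (auto simp: image_subset_iff)
qed

definition vec_of_complex :: "complex \<Rightarrow> real^2" where
  "vec_of_complex z = vector [Re z, Im z]"

lemma vec_of_complex_nth [simp]: "vec_of_complex z $ 1 = Re z" "vec_of_complex z $ 2 = Im z"
  by (simp_all add: vec_of_complex_def)

lemma linear_vec_of_complex: "linear vec_of_complex"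
  by (rule linearI) (auto simp: vec_eq_iff forall_2)

lemma inj_vec_of_complex: "inj vec_of_complex"
  by (rule injI) (metis complex_eqI vec_of_complex_nth)

text \<open>Fashoda's theorem, applied to the subpaths that cross the rectangle.\<close>
lemma complex_paths_cross_rectangle:
  fixes p q :: "real \<Rightarrow> complex"
  assumes p: "path p" "Re (p 0) \<le> x0" "x1 \<le> Re (p 1)" "\<And>t. t \<in> {0..1} \<Longrightarrow> Im (p t) \<in> {y0..y1}"
    and q: "path q" "Im (q 0) \<le> y0" "y1 \<le> Im (q 1)" "\<And>t. t \<in> {0..1} \<Longrightarrow> Re (q t) \<in> {x0..x1}"
    and "x0 < x1" "y0 < y1"
  obtains s t where "s \<in> {0..1}" "t \<in> {0..1}" "p s = q t"
proof -
  have "continuous_on {0..1} (\<lambda>t. Re (p t))" "continuous_on {0..1} (\<lambda>t. Im (q t))"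
    using p(1) q(1) unfolding path_def by (auto intro: continuous_intros)
  then obtain u1 v1 u2 v2 where
      uv1: "0 \<le> u1" "u1 \<le> v1" "v1 \<le> 1" "Re (p u1) = x0" "Re (p v1) = x1"
        "(\<lambda>t. Re (p t)) ` {u1..v1} \<subseteq> {x0..x1}" and
      uv2: "0 \<le> u2" "u2 \<le> v2" "v2 \<le> 1" "Im (q u2) = y0" "Im (q v2) = y1"
        "(\<lambda>t. Im (q t)) ` {u2..v2} \<subseteq> {y0..y1}"
    using continuous_on_crosses_strip assms by metis
  define a :: "real^2" where "a = vector [x0, y0]"
  define b :: "real^2" where "b = vector [x1, y1]"
  define F where "F = vec_of_complex \<circ> subpath u1 v1 p"
  define G where "G = vec_of_complex \<circ> subpath u2 v2 q"
  have imF: "path_image F = vec_of_complex ` p ` {u1..v1}"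
    and imG: "path_image G = vec_of_complex ` q ` {u2..v2}"
    using uv1 uv2 by (simp_all add: F_def G_def path_image_compose path_image_subpath)
  have "path F" "path G"
    using p(1) q(1) uv1 uv2
    by (simp_all add: F_def G_def path_linear_image_eq linear_vec_of_complex inj_vec_of_complex)
  moreover have "path_image F \<subseteq> cbox a b" "path_image G \<subseteq> cbox a b"
    using uv1(1,3,6) uv2(1,3,6) p(4) q(4)
    by (fastforce simp: imF imG mem_box_cart forall_2 a_def b_def)+
  moreover have "pathstart F $ 1 = a $ 1" "pathfinish F $ 1 = b $ 1"
    "pathstart G $ 2 = a $ 2" "pathfinish G $ 2 = b $ 2"
    using uv1 uv2 by (simp_all add: F_def G_def pathstart_compose pathfinish_compose a_def b_def)
  ultimately obtain z where "z \<in> path_image F" "z \<in> path_image G"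
    by (rule fashoda)
  then obtain s t where "s \<in> {u1..v1}" "t \<in> {u2..v2}" "vec_of_complex (p s) = vec_of_complex (q t)"
    by (auto simp: imF imG)
  then show thesis
    using that[of s t] uv1 uv2 inj_vec_of_complex by (auto dest: injD)
qed

lemma path_compose_linepath:
  assumes "continuous_on S P" "closed_segment a b \<subseteq> S"
  shows "path (P \<circ> linepath a b)"
  using assms by (intro path_continuous_image) (auto intro: continuous_on_subset)

lemma exists_power_rescale_into_unit:
  fixes M \<tau> :: real
  assumes M: "1 < M" and \<tau>: "0 < \<tau>" "\<tau> \<le> 1"
  obtains n :: nat where "1/M < \<tau> * M^n" "\<tau> * M^n \<le> 1"
proof -
  obtain m where "1/\<tau> < M^m"
    using real_arch_pow[OF M] by blast
  then have ex: "1 < \<tau> * M^m"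
    using \<tau> by (simp add: field_simps)
  define n where "n = (LEAST m. 1 < \<tau> * M^m)"
  have n: "1 < \<tau> * M^n"
    unfolding n_def by (rule LeastI[of _ m]) (rule ex)
  then obtain k where k: "n = Suc k"
    using \<tau> by (cases n) auto
  have "\<not> 1 < \<tau> * M^k"
    using not_less_Least[of k "\<lambda>m. 1 < \<tau> * M^m"] k n_def by auto
  moreover have "1/M < \<tau> * M^k"
    using n k M by (simp add: field_simps)
  ultimately show thesis
    using that[of k] by simp
qed

lemma drift_iterate:
  fixes P :: "real \<Rightarrow> complex" and M :: real
  assumes M: "1 < M" and drift: "\<And>\<tau>. \<tau> \<in> {0<..1} \<Longrightarrow> P (\<tau>/M) = P \<tau> + c"
    and \<tau>: "\<tau> \<in> {0<..1}"
  shows "P (\<tau>/M^n) = P \<tau> + of_nat n * c"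
proof (induction n)
  case (Suc n)
  have "\<tau>/M^n \<le> \<tau>"
    using M \<tau> by (simp add: divide_le_eq mult_le_cancel_left1 mult.commute)
  moreover have "0 < \<tau>/M^n"
    using M \<tau> by simp
  ultimately have "\<tau>/M^n \<in> {0<..1}"
    using \<tau> by simp
  then have "P (\<tau>/M^n/M) = P (\<tau>/M^n) + c"
    by (rule drift)
  then show ?case
    using Suc by (simp add: field_simps)
qed simp

lemma drift_bounded:
  fixes P :: "real \<Rightarrow> complex" and M :: real
  assumes cont: "continuous_on {0<..1} P" and M: "1 < M"
    and drift: "\<And>\<tau>. \<tau> \<in> {0<..1} \<Longrightarrow> P (\<tau>/M) = P \<tau> + c"
  obtains B where "0 \<le> B"
    "\<And>\<tau>. \<tau> \<in> {0<..1} \<Longrightarrow>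
       \<exists>n::nat. norm (P \<tau> - of_nat n * c) \<le> B \<and> 1/M^(n+1) < \<tau> \<and> \<tau> \<le> 1/M^n"
proof -
  have "{1/M..1} \<subseteq> {0<..1}"
  proof
    fix x assume x: "x \<in> {1/M..1}"
    have "0 < 1/M"
      using M by simp
    also have "1/M \<le> x"
      using x by simp
    finally show "x \<in> {0<..1}"
      using x by simp
  qed
  then have "compact (P ` {1/M..1})"
    by (intro compact_continuous_image continuous_on_subset[OF cont]) auto
  then obtain B where B: "\<And>z. z \<in> P ` {1/M..1} \<Longrightarrow> norm z \<le> B"
    using compact_imp_bounded bounded_iff by metis
  have "norm (P 1) \<le> B"
    using B M by simp
  then have "0 \<le> B"
    using norm_ge_zero order_trans by blast
  moreover have "\<exists>n::nat. norm (P \<tau> - of_nat n * c) \<le> B \<and> 1/M^(n+1) < \<tau> \<and> \<tau> \<le> 1/M^n"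
    if \<tau>: "\<tau> \<in> {0<..1}" for \<tau>
  proof -
    obtain n :: nat where n: "1/M < \<tau> * M^n" "\<tau> * M^n \<le> 1"
      using exists_power_rescale_into_unit[OF M] \<tau> by auto
    then have "\<tau> * M^n \<in> {0<..1}"
      using M by (auto intro: less_trans[of 0 "1/M"])
    from drift_iterate[where P=P, OF M drift this, of n] have "P \<tau> - of_nat n * c = P (\<tau> * M^n)"
      using M by simp
    moreover have "norm (P (\<tau> * M^n)) \<le> B"
      using B n by auto
    moreover have "1/M^(n+1) < \<tau>" "\<tau> \<le> 1/M^n"
      using n M by (auto simp: field_simps)
    ultimately show ?thesis
      by metis
  qed
  ultimately show thesis
    using that by blast
qed

lemma power_index_between:
  fixes M :: real
  assumes M: "1 < M" and "1/M^(n+1) < \<tau>" "\<tau> \<le> 1/M^n" and "\<tau> \<in> {1/M^m1..1/M^m0}"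
  shows "n \<in> {m0..m1}"
proof -
  have "1/M^(n+1) < 1/M^m0" "1/M^m1 \<le> 1/M^n"
    using assms by auto
  then have "M^m0 < M^(n+1)" "M^n \<le> M^m1"
    using M by (simp_all add: field_simps)
  then have "m0 < n + 1" "n \<le> m1"
    using M power_less_imp_less_exp power_le_imp_le_exp by (blast, blast)
  then show ?thesis
    by simp
qed

lemma drift_Im_bounded:
  fixes P :: "real \<Rightarrow> complex" and M :: real
  assumes "continuous_on {0<..1} P" "1 < M" "\<And>\<tau>. \<tau> \<in> {0<..1} \<Longrightarrow> P (\<tau>/M) = P \<tau> + 1"
  obtains B where "0 \<le> B" "\<And>\<tau>. \<tau> \<in> {0<..1} \<Longrightarrow> \<bar>Im (P \<tau>)\<bar> \<le> B"
proof -
  obtain B where "0 \<le> B" and B: "\<And>\<tau>. \<tau> \<in> {0<..1} \<Longrightarrow> \<exists>n::nat. norm (P \<tau> - of_nat n * 1) \<le> B"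
    using drift_bounded[OF assms] by metis
  have "\<bar>Im (P \<tau>)\<bar> \<le> B" if "\<tau> \<in> {0<..1}" for \<tau>
    using B[OF that] abs_Im_le_cmod order_trans by fastforce
  with \<open>0 \<le> B\<close> show thesis
    using that by blast
qed

lemma drift_Re_window:
  fixes Q :: "real \<Rightarrow> complex" and M :: real
  assumes "continuous_on {0<..1} Q" and M: "1 < M"
    and "\<And>x. x \<in> {0<..1} \<Longrightarrow> Q (x/M) = Q x + c" and "Re c = 1"
  obtains B where "0 \<le> B"
    "\<And>x m0 m1. x \<in> {1/M^m1..1/M^m0} \<Longrightarrow> Re (Q x) \<in> {real m0 - B..real m1 + B}"
proof -
  obtain B where "0 \<le> B" and B: "\<And>x. x \<in> {0<..1} \<Longrightarrow>
      \<exists>n::nat. norm (Q x - of_nat n * c) \<le> B \<and> 1/M^(n+1) < x \<and> x \<le> 1/M^n"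
    using drift_bounded[OF assms(1-3)] by metis
  have "Re (Q x) \<in> {real m0 - B..real m1 + B}" if x: "x \<in> {1/M^m1..1/M^m0}" for x m0 m1
  proof -
    have "0 < 1/M^m1" "1/M^m0 \<le> 1"
      using M by simp_all
    then have "x \<in> {0<..1}"
      using x by (simp, linarith)
    then obtain n :: nat where "norm (Q x - of_nat n * c) \<le> B" "n \<in> {m0..m1}"
      using B power_index_between[OF M _ _ x] by blast
    moreover have "\<bar>Re (Q x) - n\<bar> \<le> norm (Q x - of_nat n * c)"
      using abs_Re_le_cmod[of "Q x - of_nat n * c"] \<open>Re c = 1\<close> by simp
    ultimately show ?thesis
      by auto
  qed
  with \<open>0 \<le> B\<close> show thesis
    using that by blast
qed

text \<open>\<open>P\<close> drifts horizontally within a horizontal band, while \<open>Q\<close> drifts in the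
  direction \<open>1 + \<i> \<beta>\<close>. Between two levels \<open>m0 < m1\<close> of its drift \<open>Q\<close> crosses a
  rectangle vertically; if \<open>m1 - m0\<close> is large, a translate \<open>P + \<i> k\<close> crosses it
  horizontally.\<close>
lemma drifting_paths_meet:
  fixes P Q :: "real \<Rightarrow> complex" and M M' \<beta> :: real
  assumes contP: "continuous_on {0<..1} P" and contQ: "continuous_on {0<..1} Q"
    and M: "1 < M" "1 < M'" and \<beta>: "0 < \<beta>"
    and driftP: "\<And>\<tau>. \<tau> \<in> {0<..1} \<Longrightarrow> P (\<tau>/M) = P \<tau> + 1"
    and driftQ: "\<And>x. x \<in> {0<..1} \<Longrightarrow> Q (x/M') = Q x + Complex 1 \<beta>"
  obtains \<tau> x k where "\<tau> \<in> {0<..1}" "x \<in> {0<..1}" "P \<tau> + \<i> * of_int k = Q x"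
proof -
  obtain B where "0 \<le> B" and Im_P: "\<And>\<tau>. \<tau> \<in> {0<..1} \<Longrightarrow> \<bar>Im (P \<tau>)\<bar> \<le> B"
    using drift_Im_bounded[OF contP M(1) driftP] by blast
  obtain B' where "0 \<le> B'"
    and Re_Q: "\<And>x m0 m1. x \<in> {1/M'^m1..1/M'^m0} \<Longrightarrow> Re (Q x) \<in> {real m0 - B'..real m1 + B'}"
    using drift_Re_window[OF contQ M(2) driftQ] by auto
  define m0 :: nat where "m0 = nat \<lceil>Re (P 1) + B'\<rceil>"
  define d :: nat where "d = nat \<lceil>(2*B + 1)/\<beta>\<rceil>"
  define m1 :: nat where "m1 = m0 + d"
  define x0 where "x0 = real m0 - B'"
  define x1 where "x1 = real m1 + B'"
  define y0 where "y0 = Im (Q 1) + real m0 * \<beta>"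
  define y1 where "y1 = Im (Q 1) + real m1 * \<beta>"
  define k :: int where "k = \<lceil>y0 + B\<rceil>"
  define K :: nat where "K = nat \<lceil>x1 - Re (P 1)\<rceil>"
  have "(2*B + 1)/\<beta> \<le> real d"
    unfolding d_def by linarith
  then have "2*B + 1 \<le> real d * \<beta>"
    using \<beta> by (simp add: divide_le_eq)
  moreover have "y1 - y0 = real d * \<beta>"
    by (simp add: y0_def y1_def m1_def algebra_simps)
  ultimately have height: "2*B + 1 \<le> y1 - y0" and "0 < real d * \<beta>"
    using \<open>0 \<le> B\<close> by simp_all
  then have "m0 < m1"
    using \<beta> by (simp add: zero_less_mult_iff m1_def)
  define \<tau>1 where "\<tau>1 = 1/M^K"
  define a0 where "a0 = 1/M'^m0"
  define a1 where "a1 = 1/M'^m1"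
  have "0 < \<tau>1" "\<tau>1 \<le> 1" "0 < a1" "a1 \<le> a0" "a0 \<le> 1"
    using M \<open>m0 < m1\<close> by (simp_all add: \<tau>1_def a0_def a1_def frac_le power_increasing)
  then have segP: "closed_segment 1 \<tau>1 \<subseteq> {0<..1}"
    and segQ: "closed_segment a0 a1 = {a1..a0}" "{a1..a0} \<subseteq> {0<..1}"
    by (auto simp: closed_segment_eq_real_ivl)
  define p where "p = (\<lambda>t. P t + \<i> * of_int k) \<circ> linepath 1 \<tau>1"
  define q where "q = Q \<circ> linepath a0 a1"
  obtain s t where "s \<in> {0..1}" "t \<in> {0..1}" "p s = q t"
  proof (rule complex_paths_cross_rectangle[of p x0 x1 y0 y1 q])
    show "path p" "path q"
      unfolding p_def q_def using segP segQ
      by (auto intro!: path_compose_linepath continuous_intros contP contQ)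
    show "Re (p 0) \<le> x0" "x1 \<le> Re (p 1)"
      using drift_iterate[where P=P, OF M(1) driftP, of 1 K]
      by (simp_all add: p_def linepath_def \<tau>1_def x0_def m0_def K_def) linarith+
    show "Im (q 0) \<le> y0" "y1 \<le> Im (q 1)"
      using drift_iterate[where P=Q, OF M(2) driftQ, of 1]
      by (simp_all add: q_def linepath_def a0_def a1_def y0_def y1_def)
    show "Im (p t) \<in> {y0..y1}" if "t \<in> {0..1}" for t
    proof -
      have "linepath 1 \<tau>1 t \<in> {0<..1}"
        using linepath_in_path[OF that] segP by blast
      then have "\<bar>Im (P (linepath 1 \<tau>1 t))\<bar> \<le> B"
        by (rule Im_P)
      moreover have "y0 + B \<le> k" "k \<le> y0 + B + 1"
        unfolding k_def by linarith+
      ultimately show ?thesis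
        using height by (auto simp: p_def abs_le_iff)
    qed
    show "Re (q t) \<in> {x0..x1}" if "t \<in> {0..1}" for t
      using Re_Q[of "linepath a0 a1 t" m1 m0] linepath_in_path[of t a0 a1] that segQ
      by (simp add: q_def x0_def x1_def a0_def a1_def)
    show "x0 < x1" "y0 < y1"
      using \<open>m0 < m1\<close> height \<open>0 \<le> B\<close> \<open>0 \<le> B'\<close> by (simp_all add: x0_def x1_def)
  qed
  moreover have "linepath 1 \<tau>1 s \<in> {0<..1}" "linepath a0 a1 t \<in> {0<..1}"
    using linepath_in_path[of s 1 \<tau>1] linepath_in_path[of t a0 a1] calculation(1,2) segP segQ
    by blast+
  ultimately show thesis
    using that by (auto simp: p_def q_def)
qed

lemma continuous_on_exp_const_imp_constant:
  fixes D :: "'a::topological_space \<Rightarrow> complex"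
  assumes "connected S" "continuous_on S D" "\<And>x. x \<in> S \<Longrightarrow> exp (D x) = c"
  shows "D constant_on S"
proof (rule continuous_discrete_range_constant[OF assms(1,2)])
  fix x assume x: "x \<in> S"
  show "\<exists>e>0. \<forall>y. y \<in> S \<and> D y \<noteq> D x \<longrightarrow> e \<le> norm (D y - D x)"
  proof (intro exI[of _ "2*pi"] conjI allI impI)
    fix y assume y: "y \<in> S \<and> D y \<noteq> D x"
    then have "exp (D y) = exp (D x)"
      using assms(3) x by simp
    then obtain n :: int where n: "D y = D x + (of_int (2 * n) * pi) * \<i>"
      by (auto simp: exp_eq)
    then have "1 \<le> \<bar>real_of_int n\<bar>"
      using y by (cases "n = 0") auto
    moreover have "norm (D y - D x) = 2 * pi * \<bar>real_of_int n\<bar>"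
      using n by (simp add: norm_mult abs_mult)
    ultimately show "2*pi \<le> norm (D y - D x)"
      by simp
  qed simp
qed

lemma continuous_log_of_scaling_map:
  fixes w :: "real \<Rightarrow> complex" and M :: real
  assumes cont: "continuous_on {0<..1} w" and nz: "\<And>\<tau>. \<tau> \<in> {0<..1} \<Longrightarrow> w \<tau> \<noteq> 0"
    and M: "1 \<le> M" and scale: "\<And>\<tau>. \<tau> \<in> {0<..1} \<Longrightarrow> w (\<tau>/M) = c * w \<tau>"
  obtains L l where "continuous_on {0<..1} L" "\<And>\<tau>. \<tau> \<in> {0<..1} \<Longrightarrow> w \<tau> = exp (L \<tau>)"
    "\<And>\<tau>. \<tau> \<in> {0<..1} \<Longrightarrow> L (\<tau>/M) = L \<tau> + l" "exp l = c"
proof -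
  obtain L where contL: "continuous_on {0<..1} L" and L: "\<And>\<tau>. \<tau> \<in> {0<..1} \<Longrightarrow> w \<tau> = exp (L \<tau>)"
    using continuous_logarithm_on_contractible[OF cont convex_imp_contractible nz] by auto
  have div: "\<tau>/M \<in> {0<..1}" if "\<tau> \<in> {0<..1}" for \<tau>
    using that M by (auto simp: divide_le_eq intro: order_trans)
  have "continuous_on {0<..1} (\<lambda>\<tau>. L (\<tau>/M))"
    using M div by (intro continuous_on_compose2[OF contL] continuous_intros) auto
  then have "continuous_on {0<..1} (\<lambda>\<tau>. L (\<tau>/M) - L \<tau>)"
    by (intro continuous_intros contL)
  moreover have exp_c: "exp (L (\<tau>/M) - L \<tau>) = c" if "\<tau> \<in> {0<..1}" for \<tau>
    using L[OF that] L[OF div[OF that]] scale[OF that] by (simp add: exp_diff field_simps)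
  ultimately have "(\<lambda>\<tau>. L (\<tau>/M) - L \<tau>) constant_on {0<..1}"
    by (intro continuous_on_exp_const_imp_constant) auto
  then obtain l where l: "\<And>\<tau>. \<tau> \<in> {0<..1} \<Longrightarrow> L (\<tau>/M) - L \<tau> = l"
    by (auto simp: constant_on_def)
  show thesis
  proof (rule that[OF contL L])
    show "L (\<tau>/M) = L \<tau> + l" if "\<tau> \<in> {0<..1}" for \<tau>
      using l[OF that] by (simp add: algebra_simps)
    show "exp l = c"
      using exp_c[of 1] l[of 1] by simp
  qed
qed

lemma normalizing_coordinates:
  fixes a b :: complex
  assumes "Re a = Re b" "Re a \<noteq> 0" "Im a \<noteq> Im b"
  obtains \<Phi> :: "complex \<Rightarrow> complex" and \<beta> :: real where
    "continuous_on UNIV \<Phi>" "\<And>w z. \<Phi> (w + z) = \<Phi> w + \<Phi> z"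
    "\<Phi> a = 1" "\<Phi> b = Complex 1 \<beta>" "0 < \<beta>" "\<And>w k. \<Phi> w = \<i> * of_int k \<Longrightarrow> exp w = 1"
proof -
  define l0 where "l0 = Re a"
  define e :: int where "e = (if Im a < Im b then 1 else -1)"
  define \<Phi> where
    "\<Phi> w = Complex (Re w / l0) (of_int e * (Im w - Re w / l0 * Im a) / (2 * pi))" for w
  have e: "e * e = 1" "of_int e * (Im b - Im a) = \<bar>Im b - Im a\<bar>"
    using assms(3) by (auto simp: e_def)
  show thesis
  proof (rule that[of \<Phi> "\<bar>Im b - Im a\<bar> / (2 * pi)"])
    show "continuous_on UNIV \<Phi>"
      unfolding \<Phi>_def Complex_eq using assms(2) by (auto simp: l0_def intro!: continuous_intros)
    show "\<Phi> (w + z) = \<Phi> w + \<Phi> z" for w z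
      by (simp add: \<Phi>_def complex_eq_iff add_divide_distrib diff_divide_distrib algebra_simps)
    show "\<Phi> a = 1" "\<Phi> b = Complex 1 (\<bar>Im b - Im a\<bar> / (2 * pi))"
      using assms e by (simp_all add: \<Phi>_def l0_def complex_eq_iff algebra_simps)
    show "0 < \<bar>Im b - Im a\<bar> / (2 * pi)"
      using assms(3) by simp
    show "exp w = 1" if "\<Phi> w = \<i> * of_int k" for w k
    proof -
      have "Re w = 0"
        using that assms(2) by (simp add: \<Phi>_def complex_eq_iff l0_def)
      then have "of_int e * Im w = 2 * pi * k"
        using that by (simp add: \<Phi>_def complex_eq_iff field_simps)
      then have "of_int (e * e) * Im w = of_int e * (2 * pi * k)"
        by (simp add: mult.assoc)
      then have "Im w = of_int (2 * (e * k)) * pi"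
        using e(1) by (simp add: algebra_simps)
      then show ?thesis
        using \<open>Re w = 0\<close> exp_eq_1 by blast
    qed
  qed
qed

text \<open>In logarithmic coordinates the two spirals become the paths of
  \<open>drifting_paths_meet\<close>.\<close>
lemma scaling_spirals_meet:
  fixes u v :: "real \<Rightarrow> complex" and M M' :: real
  assumes cont: "continuous_on {0<..1} u" "continuous_on {0<..1} v"
    and nz: "\<And>\<tau>. \<tau> \<in> {0<..1} \<Longrightarrow> u \<tau> \<noteq> 0" "\<And>x. x \<in> {0<..1} \<Longrightarrow> v x \<noteq> 0"
    and M: "1 < M" "1 < M'"
    and scale: "\<And>\<tau>. \<tau> \<in> {0<..1} \<Longrightarrow> u (\<tau>/M) = c * u \<tau>"
      "\<And>x. x \<in> {0<..1} \<Longrightarrow> v (x/M') = d * v x"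
    and cd: "norm c = norm d" "norm d < 1" "c \<noteq> d"
  obtains \<tau> x where "\<tau> \<in> {0<..1}" "x \<in> {0<..1}" "u \<tau> = v x"
proof -
  obtain U lU where contU: "continuous_on {0<..1} U" and U: "\<And>\<tau>. \<tau> \<in> {0<..1} \<Longrightarrow> u \<tau> = exp (U \<tau>)"
      and shiftU: "\<And>\<tau>. \<tau> \<in> {0<..1} \<Longrightarrow> U (\<tau>/M) = U \<tau> + lU" and lU: "exp lU = c"
    using continuous_log_of_scaling_map[OF cont(1) nz(1) _ scale(1)] M by auto
  obtain V lV where contV: "continuous_on {0<..1} V" and V: "\<And>x. x \<in> {0<..1} \<Longrightarrow> v x = exp (V x)"
      and shiftV: "\<And>x. x \<in> {0<..1} \<Longrightarrow> V (x/M') = V x + lV" and lV: "exp lV = d"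
    using continuous_log_of_scaling_map[OF cont(2) nz(2) _ scale(2)] M by auto
  have "Re lU = Re lV"
    using lU lV cd(1) by (metis norm_exp_eq_Re ln_exp)
  moreover have "Re lV \<noteq> 0"
    using lV cd(2) by (metis norm_exp_eq_Re exp_zero less_irrefl)
  moreover have "Im lU \<noteq> Im lV"
    using lU lV cd(3) \<open>Re lU = Re lV\<close> complex_eqI by blast
  ultimately obtain \<Phi> \<beta> where contPhi: "continuous_on UNIV \<Phi>"
      and add: "\<And>w z. \<Phi> (w + z) = \<Phi> w + \<Phi> z" and "\<Phi> lU = 1" "\<Phi> lV = Complex 1 \<beta>" "0 < \<beta>"
      and exp_1: "\<And>w k. \<Phi> w = \<i> * of_int k \<Longrightarrow> exp w = 1"
    using normalizing_coordinates[of lU lV] by auto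
  obtain \<tau> x k where \<tau>x: "\<tau> \<in> {0<..1}" "x \<in> {0<..1}" and "\<Phi> (U \<tau>) + \<i> * of_int k = \<Phi> (V x)"
  proof (rule drifting_paths_meet[of "\<Phi> \<circ> U" "\<Phi> \<circ> V" M M' \<beta>])
    show "continuous_on {0<..1} (\<Phi> \<circ> U)" "continuous_on {0<..1} (\<Phi> \<circ> V)"
      using continuous_on_compose[OF contU continuous_on_subset[OF contPhi]]
        continuous_on_compose[OF contV continuous_on_subset[OF contPhi]] by auto
    show "(\<Phi> \<circ> U) (\<tau>/M) = (\<Phi> \<circ> U) \<tau> + 1" if "\<tau> \<in> {0<..1}" for \<tau>
      using shiftU[OF that] add \<open>\<Phi> lU = 1\<close> by simp
    show "(\<Phi> \<circ> V) (x/M') = (\<Phi> \<circ> V) x + Complex 1 \<beta>" if "x \<in> {0<..1}" for x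
      using shiftV[OF that] add \<open>\<Phi> lV = Complex 1 \<beta>\<close> by simp
  qed (use M \<open>0 < \<beta>\<close> in auto)
  then have "\<Phi> (V x - U \<tau>) = \<i> * of_int k"
    using add[of "V x - U \<tau>" "U \<tau>"] by simp
  then have "exp (V x - U \<tau>) = 1"
    by (rule exp_1)
  then have "u \<tau> = v x"
    using U[OF \<tau>x(1)] V[OF \<tau>x(2)] by (simp add: exp_diff)
  then show thesis
    using that \<tau>x by blast
qed

locale similarity_path_ifs =
  fixes N :: nat and S :: "nat \<Rightarrow> complex \<Rightarrow> complex" and r :: "nat \<Rightarrow> real"
  assumes N_ge_2: "2 \<le> N"
    and ratio: "\<And>j. j \<in> {1..N} \<Longrightarrow> 0 < r j \<and> r j < 1"
    and dist_S: "\<And>j z w. j \<in> {1..N} \<Longrightarrow> dist (S j z) (S j w) = r j * dist z w"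
    and S_1_0: "S 1 0 = 0" and S_N_1: "S N 1 = 1"
    and S_junction: "\<And>j. j \<in> {1..N-1} \<Longrightarrow> S j 1 = S (Suc j) 0"
begin

lemma S_inj: "j \<in> {1..N} \<Longrightarrow> S j z = S j w \<Longrightarrow> z = w"
  using dist_S[of j z w] ratio[of j] by auto

lemma continuous_on_S:
  assumes "j \<in> {1..N}"
  shows "continuous_on A (S j)"
proof -
  have "lipschitz_on (r j) UNIV (S j)"
    by (rule lipschitz_onI) (simp_all add: dist_S[OF assms] ratio[OF assms] less_imp_le)
  then show ?thesis
    using lipschitz_on_continuous_on continuous_on_subset by blast
qed

definition coding_map :: "(real \<Rightarrow> complex) \<Rightarrow> bool" where
  "coding_map \<pi> \<longleftrightarrow> continuous_on {0..1} \<pi> \<and> \<pi> 0 = 0 \<and> \<pi> 1 = 1 \<and>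
     (\<forall>j\<in>{1..N}. \<forall>y\<in>{0..1}. \<pi> ((real j - 1 + y) / real N) = S j (\<pi> y))"

definition piece :: "real \<Rightarrow> nat" where
  "piece x = min N (nat \<lfloor>real N * x\<rfloor> + 1)"

definition glue :: "(real \<Rightarrow> complex) \<Rightarrow> real \<Rightarrow> complex" where
  "glue f x = S (piece x) (f (real N * x - (real (piece x) - 1)))"

lemma piece_in_range: "piece x \<in> {1..N}"
  using N_ge_2 by (auto simp: piece_def)

lemma piece_bounds:
  assumes "x \<in> {0..1}"
  shows "real (piece x) - 1 \<le> real N * x" "real N * x \<le> real (piece x)"
proof -
  have "0 \<le> real N * x" "real N * x \<le> N"
    using assms by (auto simp: mult_left_le)
  then show "real (piece x) - 1 \<le> real N * x" "real N * x \<le> real (piece x)"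
    unfolding piece_def by linarith+
qed

lemma unit_interval_pieces:
  assumes "x \<in> {0..1}"
  obtains j y where "j \<in> {1..N}" "y \<in> {0..1}" "x = (real j - 1 + y) / real N"
proof (rule that[OF piece_in_range])
  show "real N * x - (real (piece x) - 1) \<in> {0..1}"
    using piece_bounds[OF assms] by auto
  show "x = (real (piece x) - 1 + (real N * x - (real (piece x) - 1))) / real N"
    using N_ge_2 by simp
qed

lemma coding_map_piece:
  "coding_map \<pi> \<Longrightarrow> j \<in> {1..N} \<Longrightarrow> y \<in> {0..1} \<Longrightarrow> \<pi> ((real j - 1 + y) / N) = S j (\<pi> y)"
  unfolding coding_map_def by blast

text \<open>On the common endpoint of two consecutive pieces both formulas agree, by
  \<open>S_junction\<close>.\<close>
lemma glue_on_piece: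
  assumes j: "j \<in> {1..N}" and x: "(real j - 1) / real N \<le> x" "x \<le> real j / real N"
    and f: "f 0 = 0" "f 1 = 1"
  shows "glue f x = S j (f (real N * x - (real j - 1)))"
proof -
  have x': "real j - 1 \<le> real N * x" "real N * x \<le> real j"
    using x N_ge_2 by (auto simp: field_simps)
  consider "real N * x < real j" | "real N * x = real j" "j = N" | "real N * x = real j" "j < N"
    using x' j by fastforce
  then show ?thesis
  proof cases
    case 1
    then have "piece x = j"
      using x' j unfolding piece_def by (simp add: floor_eq_iff) linarith
    then show ?thesis
      by (simp add: glue_def)
  next
    case 2
    then have "\<lfloor>real N * x\<rfloor> = int j"
      by (subst 2(1)) simp
    then have "piece x = j"
      using 2(2) unfolding piece_def by simp
    then show ?thesis
      by (simp add: glue_def)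
  next
    case 3
    then have "\<lfloor>real N * x\<rfloor> = int j"
      by (subst 3(1)) simp
    then have "piece x = Suc j"
      using 3(2) unfolding piece_def by simp
    then show ?thesis
      using 3 j f S_junction[of j] by (simp add: glue_def)
  qed
qed

lemma continuous_on_glue:
  assumes cont: "continuous_on {0..1} f" and f: "f 0 = 0" "f 1 = 1"
  shows "continuous_on {0..1} (glue f)"
proof -
  have N: "0 < real N"
    using N_ge_2 by simp
  have "{0..1} = (\<Union>j\<in>{1..N}. {(real j - 1) / real N .. real j / real N})" (is "_ = ?U")
  proof
    show "{0..1} \<subseteq> ?U"
    proof
      fix x :: real assume "x \<in> {0..1}"
      then have "x \<in> {(real (piece x) - 1) / real N .. real (piece x) / real N}"
        using piece_bounds N by (auto simp: field_simps)
      then show "x \<in> ?U"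
        using piece_in_range by blast
    qed
    show "?U \<subseteq> {0..1}"
    proof
      fix x assume "x \<in> ?U"
      then obtain j where j: "j \<in> {1..N}"
        and x: "(real j - 1) / real N \<le> x" "x \<le> real j / real N"
        by auto
      have "0 \<le> (real j - 1) / real N" "real j / real N \<le> 1"
        using j by auto
      then have "0 \<le> x" "x \<le> 1"
        using x by linarith+
      then show "x \<in> {0..1}"
        by simp
    qed
  qed
  moreover have "continuous_on ?U (glue f)"
  proof (rule continuous_on_closed_Union)
    fix j assume j: "j \<in> {1..N}"
    let ?I = "{(real j - 1) / real N .. real j / real N}"
    have "(\<lambda>x. real N * x - (real j - 1)) ` ?I \<subseteq> {0..1}"
      using N by (auto simp: field_simps)
    then have "continuous_on ?I (\<lambda>x. f (real N * x - (real j - 1)))"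
      by (intro continuous_on_compose2[OF cont] continuous_intros)
    then have "continuous_on ?I (\<lambda>x. S j (f (real N * x - (real j - 1))))"
      using continuous_on_compose2[OF continuous_on_S[OF j]] by blast
    then show "continuous_on ?I (glue f)"
      by (rule continuous_on_eq) (simp add: glue_on_piece[OF j _ _ f])
  qed auto
  ultimately show ?thesis
    by simp
qed

definition max_ratio :: real where
  "max_ratio = Max (r ` {1..N})"

lemma ratio_le_max_ratio: "j \<in> {1..N} \<Longrightarrow> r j \<le> max_ratio"
  unfolding max_ratio_def by (rule Max_ge) auto

lemma max_ratio_bounds: "0 < max_ratio" "max_ratio < 1"
proof -
  have "max_ratio \<in> r ` {1..N}"
    unfolding max_ratio_def by (rule Max_in) (use N_ge_2 in auto)
  then show "0 < max_ratio" "max_ratio < 1"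
    using ratio by auto
qed

definition endpoint_maps :: "(real \<Rightarrow>\<^sub>C complex) set" where
  "endpoint_maps = {f. apply_bcontfun f 0 = 0 \<and> apply_bcontfun f 1 = 1}"

text \<open>Extending \<open>glue f\<close> constantly outside \<open>[0, 1]\<close> gives a bounded continuous
  function on \<open>\<real>\<close>, where Banach's fixed point theorem is available.\<close>
definition glue_op :: "(real \<Rightarrow>\<^sub>C complex) \<Rightarrow> real \<Rightarrow>\<^sub>C complex" where
  "glue_op f = Bcontfun (ext_cont (glue (apply_bcontfun f)) 0 1)"

lemma apply_glue_op:
  assumes "f \<in> endpoint_maps"
  shows "apply_bcontfun (glue_op f) x = glue (apply_bcontfun f) (clamp 0 1 x)"
proof -
  have cont: "continuous_on (cbox 0 1) (glue (apply_bcontfun f))"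
    using assms by (auto simp: endpoint_maps_def intro: continuous_on_glue)
  then have "bounded (glue (apply_bcontfun f) ` cbox 0 1)"
    by (intro compact_imp_bounded compact_continuous_image) auto
  then have "ext_cont (glue (apply_bcontfun f)) 0 1 \<in> bcontfun"
    using cont unfolding bcontfun_def ext_cont_def
    by (auto intro: continuous_on_ext_cont[unfolded ext_cont_def] clamp_bounded)
  then show ?thesis
    by (simp add: glue_op_def Bcontfun_inverse ext_cont_def)
qed

lemma glue_op_endpoint_maps: "f \<in> endpoint_maps \<Longrightarrow> glue_op f \<in> endpoint_maps"
  using glue_on_piece[of 1 0 "apply_bcontfun f"] glue_on_piece[of N 1 "apply_bcontfun f"]
    N_ge_2 S_1_0 S_N_1
  by (simp add: apply_glue_op endpoint_maps_def)

lemma dist_glue_op: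
  assumes "f \<in> endpoint_maps" "g \<in> endpoint_maps"
  shows "dist (glue_op f) (glue_op g) \<le> max_ratio * dist f g"
proof (rule dist_bound)
  fix x
  define j where "j = piece (clamp 0 1 x)"
  define z where "z = real N * clamp 0 1 x - (real j - 1)"
  have j: "j \<in> {1..N}"
    unfolding j_def by (rule piece_in_range)
  have "dist (glue_op f x) (glue_op g x) = dist (S j (f z)) (S j (g z))"
    using assms by (simp add: apply_glue_op glue_def j_def z_def)
  also have "\<dots> = r j * dist (f z) (g z)"
    by (rule dist_S[OF j])
  also have "\<dots> \<le> max_ratio * dist f g"
    using ratio_le_max_ratio[OF j] ratio[OF j] max_ratio_bounds dist_bounded
    by (intro mult_mono) auto
  finally show "dist (glue_op f x) (glue_op g x) \<le> max_ratio * dist f g" .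
qed

lemma closed_endpoint_maps: "closed endpoint_maps"
proof -
  have "lipschitz_on 1 UNIV (\<lambda>f::real \<Rightarrow>\<^sub>C complex. apply_bcontfun f x)" for x
    by (rule lipschitz_onI) (simp_all add: dist_bounded)
  then have "continuous_on UNIV (\<lambda>f::real \<Rightarrow>\<^sub>C complex. apply_bcontfun f x)" for x
    by (rule lipschitz_on_continuous_on)
  then have "closed {f::real \<Rightarrow>\<^sub>C complex. apply_bcontfun f 0 = 0}"
    "closed {f::real \<Rightarrow>\<^sub>C complex. apply_bcontfun f 1 = 1}"
    by (auto intro: closed_Collect_eq)
  then show ?thesis
    unfolding endpoint_maps_def Collect_conj_eq by (rule closed_Int)
qed

lemma endpoint_maps_nonempty: "endpoint_maps \<noteq> {}"
proof -
  have "norm (ext_cont complex_of_real 0 1 x) \<le> 1" for x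
    using clamp_in_interval[of 0 1 x] by (simp add: ext_cont_def)
  then have "ext_cont complex_of_real 0 1 \<in> bcontfun"
    by (intro bcontfun_normI continuous_on_ext_cont continuous_intros)
  then have "Bcontfun (ext_cont complex_of_real 0 1) \<in> endpoint_maps"
    by (simp add: endpoint_maps_def Bcontfun_inverse)
  then show ?thesis
    by blast
qed

lemma exists_coding_map: "\<exists>\<pi>. coding_map \<pi>"
proof -
  obtain f where f: "f \<in> endpoint_maps" "glue_op f = f"
    using Banach_fix[OF _ endpoint_maps_nonempty _ _ _ dist_glue_op]
      glue_op_endpoint_maps closed_endpoint_maps max_ratio_bounds
    by (auto simp: complete_eq_closed)
  have fixed: "apply_bcontfun f x = glue (apply_bcontfun f) x" if "x \<in> {0..1}" for x
    using apply_glue_op[OF f(1), of x] f(2) that by simp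
  have "glue (apply_bcontfun f) ((real j - 1 + y) / real N) = S j (apply_bcontfun f y)"
    if "j \<in> {1..N}" "y \<in> {0..1}" for j y
    using that N_ge_2 f(1) by (subst glue_on_piece[OF that(1)]) (auto simp: field_simps endpoint_maps_def)
  then have "coding_map (apply_bcontfun f)"
    unfolding coding_map_def using f(1) fixed
    by (auto simp: endpoint_maps_def divide_nonneg_pos field_simps)
  then show ?thesis
    by blast
qed

lemma divide_power_in_unit_interval:
  "y \<in> {0..1} \<Longrightarrow> y / real N ^ n \<in> {0..1}"
  using N_ge_2 by (auto simp: divide_le_eq intro: order_trans[OF _ one_le_power])

lemma coding_map_scaling_at_0:
  assumes \<pi>: "coding_map \<pi>" and S1: "\<And>z. S 1 z = q * z" and y: "y \<in> {0..1}"
  shows "\<pi> (y / real N ^ n) = q^n * \<pi> y"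
proof (induction n)
  case (Suc n)
  have "1 \<in> {1..N}"
    using N_ge_2 by simp
  from coding_map_piece[OF \<pi> this divide_power_in_unit_interval[OF y]]
  have "\<pi> ((real 1 - 1 + y / real N ^ n) / N) = S 1 (\<pi> (y / real N ^ n))" .
  moreover have "(real 1 - 1 + y / real N ^ n) / N = y / real N ^ Suc n"
    by simp
  ultimately show ?case
    using Suc S1 by (simp add: ac_simps)
qed simp

lemma coding_map_scaling_at_1:
  assumes \<pi>: "coding_map \<pi>" and SN: "\<And>z. S N z - 1 = q * (z - 1)" and y: "y \<in> {0..1}"
  shows "\<pi> (1 - y / real N ^ n) - 1 = q^n * (\<pi> (1 - y) - 1)"
proof (induction n)
  case (Suc n)
  have "1 - y / real N ^ n \<in> {0..1}"
    using divide_power_in_unit_interval[OF y] by auto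
  moreover have "N \<in> {1..N}"
    using N_ge_2 by simp
  ultimately have "\<pi> ((real N - 1 + (1 - y / real N ^ n)) / N) = S N (\<pi> (1 - y / real N ^ n))"
    using coding_map_piece[OF \<pi>] by blast
  moreover have "(real N - 1 + (1 - y / real N ^ n)) / N = 1 - y / real N ^ Suc n"
    using N_ge_2 by (simp add: field_simps)
  ultimately show ?case
    using Suc SN[of "\<pi> (1 - y / real N ^ n)"] by simp
qed simp

end

locale similarity_ifs_attractor = similarity_path_ifs +
  fixes \<gamma> :: "complex set"
  assumes compact_attractor: "compact \<gamma>" and attractor_nonempty: "\<gamma> \<noteq> {}"
    and attractor_invariant: "\<gamma> = (\<Union>j\<in>{1..N}. S j ` \<gamma>)"
begin

lemma S_image_subset: "j \<in> {1..N} \<Longrightarrow> S j ` \<gamma> \<subseteq> \<gamma>"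
  using attractor_invariant by blast

lemma infdist_S_le:
  assumes j: "j \<in> {1..N}"
  shows "infdist (S j z) \<gamma> \<le> r j * infdist z \<gamma>"
proof -
  obtain a where a: "a \<in> \<gamma>" "infdist z \<gamma> = dist z a"
    using infdist_attains_inf[OF compact_imp_closed[OF compact_attractor] attractor_nonempty]
    by blast
  have "infdist (S j z) \<gamma> \<le> infdist (S j z) (S j ` \<gamma>)"
    using S_image_subset[OF j] attractor_nonempty by (intro infdist_mono) auto
  also have "\<dots> \<le> dist (S j z) (S j a)"
    using a by (intro infdist_le) auto
  also have "\<dots> = r j * infdist z \<gamma>"
    using dist_S[OF j] a by simp
  finally show ?thesis .
qed

text \<open>The point of \<open>[0, 1]\<close> whose image is farthest from \<open>\<gamma>\<close> lies in some piece, where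
  \<open>S j\<close> shrinks the distance to \<open>\<gamma>\<close> by the factor \<open>r j < 1\<close>; so that distance is \<open>0\<close>.\<close>
lemma coding_map_in_attractor:
  assumes \<pi>: "coding_map \<pi>" and x: "x \<in> {0..1}"
  shows "\<pi> x \<in> \<gamma>"
proof -
  let ?h = "\<lambda>x. infdist (\<pi> x) \<gamma>"
  have "continuous_on {0..1} ?h"
    using \<pi> by (auto simp: coding_map_def intro: continuous_intros)
  then obtain x0 where x0: "x0 \<in> {0..1}" and max: "\<And>x. x \<in> {0..1} \<Longrightarrow> ?h x \<le> ?h x0"
    using continuous_attains_sup[of "{0..1}" ?h] by auto
  obtain j y where j: "j \<in> {1..N}" and y: "y \<in> {0..1}" and x0_eq: "x0 = (real j - 1 + y) / N"
    using unit_interval_pieces[OF x0] by blast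
  have "?h x0 = infdist (S j (\<pi> y)) \<gamma>"
    using \<pi> j y by (simp add: coding_map_def x0_eq)
  also have "\<dots> \<le> r j * ?h y"
    by (rule infdist_S_le[OF j])
  also have "\<dots> \<le> max_ratio * ?h x0"
    using ratio_le_max_ratio[OF j] max[OF y] max_ratio_bounds infdist_nonneg
    by (intro mult_mono) auto
  finally have "?h x0 \<le> 0"
    using max_ratio_bounds infdist_nonneg[of "\<pi> x0" \<gamma>] by (simp add: mult_le_cancel_right1)
  then have "?h x = 0"
    using max[OF x] infdist_nonneg[of "\<pi> x" \<gamma>] by linarith
  then show ?thesis
    using in_closure_iff_infdist_zero[OF attractor_nonempty]
      closure_closed[OF compact_imp_closed[OF compact_attractor]]
    by blast
qed

lemma zero_one_in_attractor: "0 \<in> \<gamma>" "1 \<in> \<gamma>"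
  using exists_coding_map coding_map_in_attractor[of _ 0] coding_map_in_attractor[of _ 1]
  by (auto simp: coding_map_def)

end

locale similarity_arc_ifs = similarity_ifs_attractor +
  assumes consecutive_meet: "\<And>j. j \<in> {1..N-1} \<Longrightarrow> S j ` \<gamma> \<inter> S (Suc j) ` \<gamma> = {S (Suc j) 0}"
    and distant_disjoint: "\<And>j k. j \<in> {1..N} \<Longrightarrow> k \<in> {1..N} \<Longrightarrow> j > k + 1 \<or> k > j + 1 \<Longrightarrow>
      S j ` \<gamma> \<inter> S k ` \<gamma> = {}"
begin

lemma zero_notin_later_pieces:
  assumes j: "j \<in> {2..N}"
  shows "0 \<notin> S j ` \<gamma>"
proof
  assume "0 \<in> S j ` \<gamma>"
  moreover have "0 \<in> S 1 ` \<gamma>"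
    using zero_one_in_attractor(1) S_1_0 by (metis image_eqI)
  ultimately have "0 \<in> S 1 ` \<gamma> \<inter> S j ` \<gamma>"
    by blast
  show False
  proof (cases "j = 2")
    case True
    have "S 1 ` \<gamma> \<inter> S 2 ` \<gamma> = {S 2 0}"
      using consecutive_meet[of 1] N_ge_2 by (simp add: numeral_2_eq_2)
    moreover have "0 \<in> S 1 ` \<gamma> \<inter> S 2 ` \<gamma>"
      using \<open>0 \<in> S 1 ` \<gamma> \<inter> S j ` \<gamma>\<close> True by simp
    ultimately have "0 = S 2 0"
      by simp
    then have "S 1 1 = S 1 0"
      using S_junction[of 1] S_1_0 N_ge_2 by (simp add: numeral_2_eq_2)
    then show False
      using S_inj[of 1 1 0] N_ge_2 by simp
  next
    case False
    then show False
      using distant_disjoint[of j 1] j \<open>0 \<in> S 1 ` \<gamma> \<inter> S j ` \<gamma>\<close> by auto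
  qed
qed

lemma one_notin_earlier_pieces:
  assumes j: "j \<in> {1..N-1}"
  shows "1 \<notin> S j ` \<gamma>"
proof
  assume "1 \<in> S j ` \<gamma>"
  moreover have "1 \<in> S N ` \<gamma>"
    using zero_one_in_attractor(2) S_N_1 by (metis image_eqI)
  ultimately have "1 \<in> S j ` \<gamma> \<inter> S N ` \<gamma>"
    by blast
  show False
  proof (cases "j = N - 1")
    case True
    have "S j ` \<gamma> \<inter> S N ` \<gamma> = {S N 0}"
      using consecutive_meet[OF j] True N_ge_2 by simp
    with \<open>1 \<in> S j ` \<gamma> \<inter> S N ` \<gamma>\<close> have "S N 1 = S N 0"
      using S_N_1 by simp
    then show False
      using S_inj[of N 1 0] N_ge_2 by simp
  next
    case False
    then have "j + 1 < N"
      using j by auto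
    then have "S N ` \<gamma> \<inter> S j ` \<gamma> = {}"
      using distant_disjoint[of N j] j by auto
    then show False
      using \<open>1 \<in> S j ` \<gamma> \<inter> S N ` \<gamma>\<close> by blast
  qed
qed

text \<open>Points of the first piece are handled by rescaling with \<open>N\<close>, points of the other
  pieces lie in \<open>S j ` \<gamma>\<close> with \<open>j \<ge> 2\<close>, which avoids \<open>0\<close>.\<close>
lemma coding_map_nonzero:
  assumes \<pi>: "coding_map \<pi>" and x: "x \<in> {0<..1}"
  shows "\<pi> x \<noteq> 0"
proof -
  have N: "1 < real N"
    using N_ge_2 by simp
  have "\<pi> x \<noteq> 0" if "(1 / N)^k < x" "x \<le> 1" for k x
    using that
  proof (induction k arbitrary: x)
    case (Suc k)
    have "0 \<le> (1 / real N)^Suc k"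
      by simp
    then have "0 \<le> x" "x \<le> 1"
      using Suc.prems by linarith+
    then have "x \<in> {0..1}"
      by simp
    then obtain j y where j: "j \<in> {1..N}" and y: "y \<in> {0..1}" and x_eq: "x = (real j - 1 + y) / N"
      by (rule unit_interval_pieces)
    have \<pi>x: "\<pi> x = S j (\<pi> y)"
      using \<pi> j y by (simp add: coding_map_def x_eq)
    show ?case
    proof (cases "j = 1")
      case True
      then have "(1 / N)^k < y"
        using Suc.prems N by (simp add: x_eq field_simps)
      then have "\<pi> y \<noteq> 0"
        using Suc.IH y by simp
      then show ?thesis
        using \<pi>x True S_inj[of 1 "\<pi> y" 0] S_1_0 N_ge_2 by auto
    next
      case False
      then have "0 \<notin> S j ` \<gamma>"
        using j by (intro zero_notin_later_pieces) auto
      then show ?thesis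
        using \<pi>x coding_map_in_attractor[OF \<pi> y] by force
    qed
  qed simp
  moreover obtain k where "(1 / N)^k < x"
    using real_arch_pow_inv[of x "1 / N"] x N by auto
  ultimately show ?thesis
    using x by simp
qed

lemma coding_map_ne_one:
  assumes \<pi>: "coding_map \<pi>" and x: "x \<in> {0..<1}"
  shows "\<pi> x \<noteq> 1"
proof -
  have N: "1 < real N"
    using N_ge_2 by simp
  have "\<pi> x \<noteq> 1" if "0 \<le> x" "x < 1 - (1 / N)^k" for k x
    using that
  proof (induction k arbitrary: x)
    case (Suc k)
    have "0 \<le> (1 / real N)^Suc k"
      by simp
    then have "0 \<le> x" "x \<le> 1"
      using Suc.prems by linarith+
    then have "x \<in> {0..1}"
      by simp
    then obtain j y where j: "j \<in> {1..N}" and y: "y \<in> {0..1}" and x_eq: "x = (real j - 1 + y) / N"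
      by (rule unit_interval_pieces)
    have \<pi>x: "\<pi> x = S j (\<pi> y)"
      using \<pi> j y by (simp add: coding_map_def x_eq)
    show ?case
    proof (cases "j = N")
      case True
      then have "1 - x = (1 - y) / N"
        using N by (simp add: x_eq field_simps)
      moreover have "(1 / real N)^Suc k = (1 / N)^k / N"
        by simp
      ultimately have "(1 / N)^k / N < (1 - y) / N"
        using Suc.prems by linarith
      then have "y < 1 - (1 / N)^k"
        using N by (simp add: divide_less_cancel)
      then have "\<pi> y \<noteq> 1"
        using Suc.IH y by simp
      then show ?thesis
        using \<pi>x True S_inj[of N "\<pi> y" 1] S_N_1 N_ge_2 by auto
    next
      case False
      then have "1 \<notin> S j ` \<gamma>"
        using j by (intro one_notin_earlier_pieces) auto
      then show ?thesis
        using \<pi>x coding_map_in_attractor[OF \<pi> y] by force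
    qed
  qed simp
  moreover obtain k where "(1 / N)^k < 1 - x"
    using real_arch_pow_inv[of "1 - x" "1 / N"] x N by auto
  then have "x < 1 - (1 / N)^k"
    by linarith
  ultimately show ?thesis
    using x by simp
qed

lemma junction_pieces_disjoint_off_junction:
  assumes \<pi>: "coding_map \<pi>" and i: "i \<in> {1..N-1}" and "\<tau> \<in> {0<..1}" "x \<in> {0<..1}"
  shows "S i (\<pi> (1 - \<tau>)) \<noteq> S (Suc i) (\<pi> x)"
proof
  assume eq: "S i (\<pi> (1 - \<tau>)) = S (Suc i) (\<pi> x)"
  have "\<pi> (1 - \<tau>) \<in> \<gamma>" "\<pi> x \<in> \<gamma>"
    using assms by (auto intro: coding_map_in_attractor)
  then have "S (Suc i) (\<pi> x) \<in> S i ` \<gamma> \<inter> S (Suc i) ` \<gamma>"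
    using eq by (metis IntI image_eqI)
  then have "S (Suc i) (\<pi> x) = S (Suc i) 0"
    using consecutive_meet[OF i] by simp
  moreover have "Suc i \<in> {1..N}"
    using i by auto
  ultimately have "\<pi> x = 0"
    using S_inj by blast
  then show False
    using coding_map_nonzero[OF \<pi>] assms(4) by simp
qed

text \<open>Near the junction point \<open>S i 1 = S (Suc i) 0\<close> the pieces \<open>S i ` \<gamma>\<close> and
  \<open>S (Suc i) ` \<gamma>\<close> are spirals with ratios \<open>qN^s\<close> and \<open>q1^t\<close>, conjugated if \<open>S i\<close> and
  \<open>S (Suc i)\<close> both reverse orientation.\<close>
lemma no_spiralling_junction:
  assumes \<pi>: "coding_map \<pi>" and i: "i \<in> {1..N-1}"
    and S1: "\<And>z. S 1 z = q1 * z" and SN: "\<And>z. S N z - 1 = qN * (z - 1)"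
    and Si: "\<And>z. S i z - S i 1 = a * (if rf then cnj (z - 1) else z - 1)"
    and Si': "\<And>z. S (Suc i) z - S (Suc i) 0 = b * (if rf then cnj z else z)"
    and st: "0 < s" "0 < t" and norm_eq: "norm (q1^t) = norm (qN^s)" and ne: "q1^t \<noteq> qN^s"
  shows False
proof -
  have i': "i \<in> {1..N}" "Suc i \<in> {1..N}"
    using i by auto
  have N: "1 < real N"
    using N_ge_2 by simp
  define \<sigma> where "\<sigma> z = (if rf then cnj z else z)" for z
  have \<sigma>: "\<sigma> (z * w) = \<sigma> z * \<sigma> w" "norm (\<sigma> z) = norm z" "inj \<sigma>" for z w
    unfolding \<sigma>_def by (auto intro: injI split: if_splits)
  define u where "u \<tau> = S i (\<pi> (1 - \<tau>)) - S i 1" for \<tau>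
  define v where "v x = S (Suc i) (\<pi> x) - S (Suc i) 0" for x
  obtain \<tau> x where \<tau>x: "\<tau> \<in> {0<..1}" "x \<in> {0<..1}" and "u \<tau> = v x"
  proof (rule scaling_spirals_meet[of u v "real N ^ s" "real N ^ t" "\<sigma> (qN^s)" "\<sigma> (q1^t)"])
    have "continuous_on {0<..1} (\<lambda>\<tau>. \<pi> (1 - \<tau>))" "continuous_on {0<..1} \<pi>"
      using \<pi> unfolding coding_map_def
      by (auto intro!: continuous_on_compose2[of "{0..1}" \<pi>] continuous_intros
          intro: continuous_on_subset)
    then show "continuous_on {0<..1} u" "continuous_on {0<..1} v"
      unfolding u_def v_def
      by (auto intro!: continuous_intros continuous_on_compose2[OF continuous_on_S] i')
    show "u \<tau> \<noteq> 0" if "\<tau> \<in> {0<..1}" for \<tau>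
      using coding_map_ne_one[OF \<pi>, of "1 - \<tau>"] S_inj[OF i'(1)] that by (auto simp: u_def)
    show "v x \<noteq> 0" if "x \<in> {0<..1}" for x
      using coding_map_nonzero[OF \<pi> that] S_inj[OF i'(2)] by (auto simp: v_def)
    show "u (\<tau> / real N ^ s) = \<sigma> (qN^s) * u \<tau>" if "\<tau> \<in> {0<..1}" for \<tau>
      using coding_map_scaling_at_1[OF \<pi> SN, of \<tau> s] that by (simp add: u_def Si \<sigma>(1) flip: \<sigma>_def)
    show "v (x / real N ^ t) = \<sigma> (q1^t) * v x" if "x \<in> {0<..1}" for x
      using coding_map_scaling_at_0[OF \<pi> S1, of x t] that by (simp add: v_def Si' \<sigma>(1) flip: \<sigma>_def)
    show "1 < real N ^ s" "1 < real N ^ t"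
      using N st by simp_all
    show "norm (\<sigma> (qN^s)) = norm (\<sigma> (q1^t))" "\<sigma> (qN^s) \<noteq> \<sigma> (q1^t)"
      using norm_eq ne \<sigma>(2,3) by (auto dest: injD)
    have "norm q1 = r 1"
      using dist_S[of 1 1 0] S1 N_ge_2 by (simp add: dist_norm)
    then show "norm (\<sigma> (q1^t)) < 1"
      using ratio[of 1] N_ge_2 st \<sigma>(2) by (simp add: norm_power power_less_one_iff)
  qed
  then have "S i (\<pi> (1 - \<tau>)) = S (Suc i) (\<pi> x)"
    using S_junction[OF i] by (simp add: u_def v_def)
  then show False
    using junction_pieces_disjoint_off_junction[OF \<pi> i \<tau>x] by simp
qed

end

lemma simil_diff:
  "simil r a rf b z - simil r a rf b w = complex_of_real r * cis a * (if rf then cnj (z - w) else z - w)"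
  by (simp add: simil_def algebra_simps)

lemma dist_simil:
  assumes "0 < r"
  shows "dist (simil r a rf b z) (simil r a rf b w) = r * dist z w"
proof -
  have "norm (if rf then cnj (z - w) else z - w) = norm (z - w)"
    by (cases rf) (simp_all only: if_True if_False complex_mod_cnj)
  then show ?thesis
    using assms by (simp only: dist_norm simil_diff norm_mult norm_of_real abs_of_pos norm_cis
        mult_1_right)
qed

lemma similarity_arc_ifs_of_IFS_arc:
  assumes data: "IFS_data N r \<alpha> rf b" and arc: "IFS_arc N S \<gamma>"
    and S: "S = (\<lambda>j. simil (r j) (\<alpha> j) (rf j) (b j))"
  shows "similarity_arc_ifs N S r \<gamma>"
proof unfold_locales
  have ratio: "\<And>j. j \<in> {1..N} \<Longrightarrow> 0 < r j \<and> r j < 1"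
    using data by (auto simp: IFS_data_def)
  then show "\<And>j. j \<in> {1..N} \<Longrightarrow> 0 < r j \<and> r j < 1"
    "\<And>j z w. j \<in> {1..N} \<Longrightarrow> dist (S j z) (S j w) = r j * dist z w"
    by (simp_all add: S dist_simil)
  show "2 \<le> N"
    using data by (simp add: IFS_data_def)
  show "S 1 0 = 0" "S N 1 = 1" "\<And>j. j \<in> {1..N - 1} \<Longrightarrow> S j 1 = S (Suc j) 0"
    "compact \<gamma>" "\<gamma> \<noteq> {}" "\<gamma> = (\<Union>j\<in>{1..N}. S j ` \<gamma>)"
    using arc by (auto simp: IFS_arc_def normalized_IFS_path_def is_attractor_def)
  show "\<And>j. j \<in> {1..N - 1} \<Longrightarrow> S j ` \<gamma> \<inter> S (Suc j) ` \<gamma> = {S (Suc j) 0}"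
    using arc by (simp add: IFS_arc_def)
  show "\<And>j k. j \<in> {1..N} \<Longrightarrow> k \<in> {1..N} \<Longrightarrow> k + 1 < j \<or> j + 1 < k \<Longrightarrow> S j ` \<gamma> \<inter> S k ` \<gamma> = {}"
    using arc unfolding IFS_arc_def by blast
qed

lemma cis_ne_of_irrational_turn:
  assumes "x - y = 2 * pi * q" and "q \<notin> \<rat>"
  shows "cis x \<noteq> cis y"
proof
  assume "cis x = cis y"
  then have "cis (x - y) = 1"
    by (simp add: cis_divide[symmetric])
  then have "exp (\<i> * complex_of_real (x - y)) = 1"
    by (simp add: cis_conv_exp)
  then obtain n :: int where "x - y = 2 * pi * n"
    by (auto simp: exp_eq_1)
  then have "q = of_int n"
    using assms(1) by simp
  then show False
    using assms(2) by simp
qed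

lemma simil_diff_fixed_point:
  assumes "simil r a False b p = p"
  shows "simil r a False b z - p = complex_of_real r * cis a * (z - p)"
  using simil_diff[of r a False b z p] assms by simp

lemma power_cis_ne_of_irrational_turn:
  assumes "0 < x" "x ^ t = y ^ s" "real t * a - real s * c = 2 * pi * q" "q \<notin> \<rat>"
  shows "(complex_of_real x * cis a) ^ t \<noteq> (complex_of_real y * cis c) ^ s"
proof
  have pow: "(complex_of_real x * cis a) ^ t = complex_of_real (x ^ t) * cis (real t * a)"
    "(complex_of_real y * cis c) ^ s = complex_of_real (y ^ s) * cis (real s * c)"
    by (simp_all add: power_mult_distrib Complex.DeMoivre)
  assume "(complex_of_real x * cis a) ^ t = (complex_of_real y * cis c) ^ s"
  then have "complex_of_real (x ^ t) * cis (real t * a) = complex_of_real (x ^ t) * cis (real s * c)"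
    unfolding pow assms(2) .
  then show False
    using cis_ne_of_irrational_turn[OF assms(3,4)] assms(1) by simp
qed

lemma equal_powers_exponents_nonzero:
  fixes x y :: real
  assumes "0 < x" "x < 1" "0 < y" "y < 1" "x ^ t = y ^ s" "t \<noteq> 0 \<or> s \<noteq> 0"
  shows "t \<noteq> 0" "s \<noteq> 0"
  using assms by (metis less_numeral_extra(4) power_0 power_inject_exp')+

theorem theorem1p7:
  fixes N :: nat and r \<alpha> :: "nat \<Rightarrow> real" and rf :: "nat \<Rightarrow> bool"
    and b :: "nat \<Rightarrow> complex" and \<gamma> :: "complex set"
  defines "S \<equiv> (\<lambda>j. simil (r j) (\<alpha> j) (rf j) (b j))"
  assumes data: "IFS_data N r \<alpha> rf b"
    and path: "normalized_IFS_path N S \<gamma>"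
    and orient: "\<not> rf 1" "\<not> rf N"
    and angles: "\<exists>t s :: nat. r 1 ^ t = r N ^ s \<and>
                   (\<exists>q::real. q \<notin> \<rat> \<and> real t * \<alpha> 1 - real s * \<alpha> N = 2 * pi * q)"
    and junction: "\<exists>i\<in>{1..N-1}. rf i = rf (Suc i) \<and>
                   \<not> (\<exists>\<theta>. rot_around (S i 1) \<theta> ` (S i ` \<gamma>) \<subseteq> S (Suc i) ` \<gamma>) \<and>
                   \<not> (\<exists>\<theta>. rot_around (S i 1) \<theta> ` (S (Suc i) ` \<gamma>) \<subseteq> S i ` \<gamma>)"
  shows "\<not> IFS_arc N S \<gamma>"
proof
  assume "IFS_arc N S \<gamma>"
  with data interpret similarity_arc_ifs N S r \<gamma>
    by (rule similarity_arc_ifs_of_IFS_arc) (simp add: S_def)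
  obtain t s :: nat and q :: real where ts: "r 1 ^ t = r N ^ s"
    and q: "q \<notin> \<rat>" "real t * \<alpha> 1 - real s * \<alpha> N = 2 * pi * q"
    using angles by blast
  obtain i where i: "i \<in> {1..N-1}" and "rf i = rf (Suc i)"
    using junction by blast
  obtain \<pi> where "coding_map \<pi>"
    using exists_coding_map by blast
  have r: "0 < r 1" "r 1 < 1" "0 < r N" "r N < 1"
    using ratio[of 1] ratio[of N] N_ge_2 by auto
  have "t \<noteq> 0 \<or> s \<noteq> 0"
  proof (rule ccontr)
    assume "\<not> (t \<noteq> 0 \<or> s \<noteq> 0)"
    then have "q = 0"
      using q(2) by simp
    then show False
      using q(1) by simp
  qed
  then have "t \<noteq> 0" "s \<noteq> 0"
    using equal_powers_exponents_nonzero[OF r(1-4) ts] by auto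
  show False
  proof (rule no_spiralling_junction[OF \<open>coding_map \<pi>\<close> i])
    show "S 1 z = complex_of_real (r 1) * cis (\<alpha> 1) * z" for z
      using simil_diff_fixed_point[of "r 1" "\<alpha> 1" "b 1" 0 z] S_1_0 orient(1) by (simp add: S_def)
    show "S N z - 1 = complex_of_real (r N) * cis (\<alpha> N) * (z - 1)" for z
      using simil_diff_fixed_point[of "r N" "\<alpha> N" "b N" 1 z] S_N_1 orient(2) by (simp add: S_def)
    show "S i z - S i 1 = complex_of_real (r i) * cis (\<alpha> i) * (if rf i then cnj (z - 1) else z - 1)"
      "S (Suc i) z - S (Suc i) 0 = complex_of_real (r (Suc i)) * cis (\<alpha> (Suc i)) * (if rf i then cnj z else z)"
      for z
      using \<open>rf i = rf (Suc i)\<close> by (simp_all add: S_def simil_diff)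
    show "norm ((complex_of_real (r 1) * cis (\<alpha> 1)) ^ t) = norm ((complex_of_real (r N) * cis (\<alpha> N)) ^ s)"
      using ts r by (simp add: norm_mult norm_power)
    show "(complex_of_real (r 1) * cis (\<alpha> 1)) ^ t \<noteq> (complex_of_real (r N) * cis (\<alpha> N)) ^ s"
      using power_cis_ne_of_irrational_turn[OF r(1) ts q(2,1)] .
  qed (use \<open>s \<noteq> 0\<close> \<open>t \<noteq> 0\<close> in auto)
qed

end
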